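(* Under the standing assumptions below, $\lim_{|v|\to+\infty}\frac{q(s,t,v)}{v}=0$ uniformly in $(s,t)\in[0,\pi]\times\mathbb{T}$.
   Context: $\mathbb{T}=\mathbb{R}/(2\pi\mathbb{Z})$. The distinct values $m^2-n^2$ ($m\in\mathbb{N},n\in\mathbb{N}_0$) are ordered $\dots<\lambda_{-1}<\lambda_0=0<\lambda_1<\dots$. Fix a nonzero integer $k$, $\varepsilon_1\in\,]0,\lambda_k-\lambda_{k-1}[$, $\varepsilon_2$ with $0<\varepsilon_2<\frac{1}{\lambda_k-\lambda_{k-1}-\varepsilon_1}-\max\{0,-\frac{1}{\lambda_{k-1}+\varepsilon_1}\}$, $\mu=\max\{0,-\frac{1}{\lambda_{k-1}+\varepsilon_1}\}+\varepsilon_2$, $p_k=\lambda_{k-1}+\varepsilon_1$, $q_k=\lambda_{k-1}+\varepsilon_1+1/\mu$, and $(a,b)\in\,]p_k,q_k[^2$. Let $p:[0,\pi]\times\mathbb{T}\times\mathbb{R}\to\mathbb{R}$ be continuous with $\lim_{|u|\to+\infty}p(s,t,u)/u=0$ uniformly in $(s,t)$, and such that for each $(s,t)$ the map $u\mapsto au^+-bu^-+p(s,t,u)-p_ku$ is strictly increasing and $u\mapsto au^+-bu^-+p(s,t,u)-q_ku$ is strictly decreasing ($u^+=\max\{u,0\}$, $u^-=u^+-u$). Let $H(u)=\frac12(a-p_k)(u^+)^2+\frac12(b-p_k)(u^-)^2$, $P(s,t,u)=\int_0^up(s,t,\tau)d\tau$, $J=H+P$, and $J^*(s,t,v)=\sup_{u\in\mathbb{R}}[vu-J(s,t,u)]$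 (Fenchel–Legendre transform in $u$), which is $C^1$ in $v$; $H^*(v)=\frac{(v^+)^2}{2(a-p_k)}+\frac{(v^-)^2}{2(b-p_k)}$; $Q(s,t,v)=J^*(s,t,v)-H^*(v)$ and $q=\partial Q/\partial v$. *)

theory Defs
  imports "HOL-Analysis.Analysis"
begin

definition lam_set :: "int set" where
  "lam_set = {int m ^ 2 - int n ^ 2 | m n :: nat. 1 \<le> m}"

definition lam :: "int \<Rightarrow> int" where
  "lam = (THE f. strict_mono f \<and> range f = lam_set \<and> f 0 = 0)"

definition oint :: "(real \<Rightarrow> real) \<Rightarrow> real \<Rightarrow> real" where
  "oint f u = (if 0 \<le> u then integral {0..u} f else - integral {u..0} f)"

end

theory Submission
  imports Defs
begin

(* Put h(u) = (a - p_k) u^+ - (b - p_k) u^- and j = h + p(s, t, -). Then J' = j and the derivative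
   of H^* is the inverse of h. Hypothesis mono_inc says that j is strictly increasing, and sublinearity
   of p makes it onto, so J^* is differentiable with derivative the inverse of j, and q = j^-1 - h^-1.
   For v = j(u) = h(u) + p(u) this difference is h^-1(v - p(u)) - h^-1(v), of size at most
   |p(u)| / min(a - p_k, b - p_k); since |u| = O(|v|), sublinearity of p gives q(v) = o(|v|).
   Uniformity in (s, t) rests on the affine bound |p(u)| <= e |u| + M_e, which monotonicity of j
   yields without any compactness in t. *)

lemma has_real_derivative_of_quotient_bound:
  fixes F r :: "real \<Rightarrow> real"
  assumes "\<And>y. y \<noteq> x \<Longrightarrow> \<bar>(F y - F x) / (y - x) - f\<bar> \<le> r y"
    and "(r \<longlongrightarrow> 0) (at x)"
  shows "(F has_real_derivative f) (at x)"
proof -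
  have "((\<lambda>y. (F y - F x) / (y - x) - f) \<longlongrightarrow> 0) (at x)"
    by (rule Lim_null_comparison[OF _ assms(2)])
       (use assms(1) in \<open>auto simp: eventually_at_filter\<close>)
  then show ?thesis
    by (simp add: has_field_derivative_iff LIM_zero_iff)
qed

lemma pos_part_sq_has_real_derivative:
  "((\<lambda>x. (max x 0)\<^sup>2) has_real_derivative 2 * max x 0) (at x)"
proof (rule has_real_derivative_of_quotient_bound)
  show "((\<lambda>y. \<bar>y - x\<bar>) \<longlongrightarrow> 0) (at x)"
    by (intro tendsto_eq_intros) auto
  fix y :: real
  assume "y \<noteq> x"
  have sq: "(y - x)\<^sup>2 = x\<^sup>2 - 2 * (x * y) + y\<^sup>2"
    by (simp add: power2_eq_square algebra_simps)
  have "(max y 0)\<^sup>2 - (max x 0)\<^sup>2 - 2 * max x 0 * (y - x)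
      = (if 0 \<le> x then if 0 \<le> y then (y - x)\<^sup>2 else x\<^sup>2 - 2 * (x * y)
         else if 0 \<le> y then y\<^sup>2 else 0)"
    by (simp add: power2_eq_square algebra_simps)
  moreover have "x * y \<le> 0" if "(0 \<le> x) \<noteq> (0 \<le> y)"
    using that mult_nonneg_nonpos[of x y] mult_nonneg_nonpos[of y x] by (auto simp: mult.commute)
  ultimately have "\<bar>(max y 0)\<^sup>2 - (max x 0)\<^sup>2 - 2 * max x 0 * (y - x)\<bar> \<le> (y - x)\<^sup>2"
    using zero_le_power2[of x] zero_le_power2[of y] zero_le_power2[of "y - x"] sq by (smt (verit))
  with \<open>y \<noteq> x\<close> show "\<bar>((max y 0)\<^sup>2 - (max x 0)\<^sup>2) / (y - x) - 2 * max x 0\<bar> \<le> \<bar>y - x\<bar>"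
    by (simp add: field_simps power2_eq_square)
qed

lemma oint_has_real_derivative:
  assumes "continuous_on UNIV f"
  shows "(oint f has_real_derivative f x) (at x)"
proof -
  define c where "c = min x 0 - 1"
  have integrable: "f integrable_on {y..z}" for y z
    by (rule integrable_continuous_interval[OF continuous_on_subset[OF assms]]) simp
  have oint_eq: "oint f u = integral {c..u} f - integral {c..0} f" if "c < u" for u
  proof (cases "0 \<le> u")
    case True
    have "integral {c..0} f + integral {0..u} f = integral {c..u} f"
      using True c_def integrable by (intro Henstock_Kurzweil_Integration.integral_combine) auto
    with True show ?thesis
      by (simp add: oint_def)
  next
    case False
    have "integral {c..u} f + integral {u..0} f = integral {c..0} f"
      using False that integrable by (intro Henstock_Kurzweil_Integration.integral_combine) auto
    with False show ?thesis
      by (simp add: oint_def)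
  qed
  have "((\<lambda>u. integral {c..u} f) has_real_derivative f x) (at x within {c..x + 1})"
    using c_def by (intro integral_has_real_derivative continuous_on_subset[OF assms]) auto
  moreover have "at x within {c..x + 1} = at x"
    using c_def by (intro at_within_interior) auto
  ultimately have "((\<lambda>u. integral {c..u} f - integral {c..0} f) has_real_derivative f x - 0) (at x)"
    by (intro DERIV_diff DERIV_const) simp
  then show ?thesis
    unfolding diff_zero by (rule has_field_derivative_transform_within_open[of _ _ _ "{c<..}"])
       (auto simp: c_def oint_eq)
qed

lemma tangent_le_of_mono_derivative:
  fixes F f :: "real \<Rightarrow> real"
  assumes "\<And>x. (F has_real_derivative f x) (at x)" and "mono f"
  shows "F u + f u * (w - u) \<le> F w"
proof (cases u w rule: linorder_cases)
  case less
  then obtain z where "u < z" "z < w" "F w - F u = (w - u) * f z"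
    using MVT2[of u w F f] assms(1) by blast
  moreover have "f u * (w - u) \<le> f z * (w - u)"
    using less \<open>u < z\<close> by (intro mult_right_mono monoD[OF assms(2)]) auto
  ultimately show ?thesis
    by (simp add: algebra_simps)
next
  case greater
  then obtain z where "w < z" "z < u" "F u - F w = (u - w) * f z"
    using MVT2[of w u F f] assms(1) by blast
  moreover have "f z * (u - w) \<le> f u * (u - w)"
    using greater \<open>z < u\<close> by (intro mult_right_mono monoD[OF assms(2)]) auto
  ultimately show ?thesis
    by (simp add: algebra_simps)
qed simp

lemma Fenchel_conjugate_eq:
  fixes F f g :: "real \<Rightarrow> real"
  assumes tangent: "\<And>u w. F u + f u * (w - u) \<le> F w"
    and inverse: "f (g v) = v"
  shows "(SUP u. v * u - F u) = v * g v - F (g v)"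
proof (rule cSup_eq_maximum)
  show "v * g v - F (g v) \<in> range (\<lambda>u. v * u - F u)"
    by auto
  fix y
  assume "y \<in> range (\<lambda>u. v * u - F u)"
  then obtain w where "y = v * w - F w"
    by auto
  with tangent[of "g v" w] inverse show "y \<le> v * g v - F (g v)"
    by (simp add: algebra_simps)
qed

lemma Fenchel_conjugate_has_real_derivative:
  fixes F f g :: "real \<Rightarrow> real"
  assumes tangent: "\<And>u w. F u + f u * (w - u) \<le> F w"
    and inverse: "\<And>v. f (g v) = v"
    and "isCont g x"
  shows "((\<lambda>v. SUP u. v * u - F u) has_real_derivative g x) (at x)"
proof -
  define G where "G v = v * g v - F (g v)" for v
  have conjugate: "(\<lambda>v. SUP u. v * u - F u) = G"
    unfolding G_def by (intro ext Fenchel_conjugate_eq[OF tangent inverse])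
  have slope: "(y - z) * g z \<le> G y - G z" for y z
    using tangent[of "g y" "g z"] inverse[of y] by (simp add: G_def algebra_simps)
  have "(G has_real_derivative g x) (at x)"
  proof (rule has_real_derivative_of_quotient_bound)
    fix y
    assume "y \<noteq> x"
    have bounds: "(y - x) * g x \<le> G y - G x" "G y - G x \<le> (y - x) * g y"
      using slope[of y x] slope[of x y] by (auto simp: algebra_simps)
    consider "x < y" | "y < x"
      using \<open>y \<noteq> x\<close> by linarith
    then show "\<bar>(G y - G x) / (y - x) - g x\<bar> \<le> \<bar>g y - g x\<bar>"
    proof cases
      case 1
      with bounds have "g x \<le> (G y - G x) / (y - x)" "(G y - G x) / (y - x) \<le> g y"
        by (simp_all add: le_divide_eq divide_le_eq mult.commute)
      then show ?thesis
        by (simp add: abs_le_iff)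
    next
      case 2
      with bounds have "(G y - G x) / (y - x) \<le> g x" "g y \<le> (G y - G x) / (y - x)"
        by (simp_all add: le_divide_eq divide_le_eq mult.commute)
      then show ?thesis
        by (simp add: abs_le_iff)
    qed
  next
    show "((\<lambda>y. \<bar>g y - g x\<bar>) \<longlongrightarrow> 0) (at x)"
      using assms(3) by (simp add: isCont_def LIM_zero_iff tendsto_rabs_zero_iff)
  qed
  then show ?thesis
    by (simp add: conjugate)
qed

lemma Fenchel_conjugate_has_real_derivative_inverse:
  fixes J j :: "real \<Rightarrow> real"
  assumes deriv: "\<And>u. (J has_real_derivative j u) (at u)"
    and "strict_mono j" "surj j" "continuous_on UNIV j"
  shows "((\<lambda>v. SUP u. v * u - J u) has_real_derivative u) (at (j u))"
proof -
  have j_inv: "j (inv j v) = v" for v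
    using \<open>surj j\<close> by (rule surj_f_inv_f)
  have inv_j: "inv j (j u) = u" for u
    using strict_mono_on_imp_inj_on[OF \<open>strict_mono j\<close>] by simp
  have tangent: "J u + j u * (w - u) \<le> J w" for u w
    using deriv \<open>strict_mono j\<close> by (rule tangent_le_of_mono_derivative[OF _ strict_mono_mono])
  have j_cont: "isCont j z" for z
    using \<open>continuous_on UNIV j\<close> continuous_on_eq_continuous_at[OF open_UNIV] by blast
  have "isCont (inv j) (j u)"
    by (rule isCont_inverse_function[where d = 1]) (simp_all add: inv_j j_cont)
  from Fenchel_conjugate_has_real_derivative[OF tangent j_inv this] show ?thesis
    by (simp add: inv_j)
qed

definition pos_neg_linear :: "real \<Rightarrow> real \<Rightarrow> real \<Rightarrow> real" where
  "pos_neg_linear A B u = A * max u 0 - B * max (- u) 0"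

lemma pos_neg_linear_primitive_has_real_derivative:
  "((\<lambda>u. A * (max u 0)\<^sup>2 / 2 + B * (max (- u) 0)\<^sup>2 / 2) has_real_derivative pos_neg_linear A B u) (at u)"
proof -
  have "((\<lambda>u. (max (- u) 0)\<^sup>2) has_real_derivative 2 * max (- u) 0 * - 1) (at u)"
    by (rule DERIV_chain2[OF pos_part_sq_has_real_derivative DERIV_minus[OF DERIV_ident]])
  from DERIV_add[OF DERIV_cmult[OF pos_part_sq_has_real_derivative, of "A / 2"]
      DERIV_cmult[OF this, of "B / 2"]]
  show ?thesis
    by (simp add: pos_neg_linear_def mult.commute)
qed

lemma pos_neg_linear_inverse:
  assumes "0 < A" "0 < B"
  shows "pos_neg_linear (1 / A) (1 / B) (pos_neg_linear A B u) = u"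
  using assms
  by (cases "0 \<le> u") (auto simp: pos_neg_linear_def max_def mult_pos_neg zero_le_mult_iff mult_le_0_iff)

lemma pos_neg_linear_lipschitz:
  assumes "0 \<le> A" "0 \<le> B"
  shows "\<bar>pos_neg_linear A B x - pos_neg_linear A B y\<bar> \<le> max A B * \<bar>x - y\<bar>"
proof -
  define \<alpha> \<beta> where "\<alpha> = max x 0 - max y 0" and "\<beta> = max (- y) 0 - max (- x) 0"
  have "\<bar>pos_neg_linear A B x - pos_neg_linear A B y\<bar> = \<bar>A * \<alpha> + B * \<beta>\<bar>"
    by (simp add: pos_neg_linear_def \<alpha>_def \<beta>_def algebra_simps)
  also have "\<dots> \<le> A * \<bar>\<alpha>\<bar> + B * \<bar>\<beta>\<bar>"
    using abs_triangle_ineq[of "A * \<alpha>" "B * \<beta>"] assms by (simp add: abs_mult)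
  also have "\<dots> \<le> max A B * (\<bar>\<alpha>\<bar> + \<bar>\<beta>\<bar>)"
    unfolding distrib_left by (intro add_mono mult_right_mono) auto
  also have "\<bar>\<alpha>\<bar> + \<bar>\<beta>\<bar> = \<bar>x - y\<bar>"
    by (auto simp: \<alpha>_def \<beta>_def max_def)
  finally show ?thesis .
qed

lemma surj_pos_neg_linear_plus:
  assumes "0 < A" "0 < B" "continuous_on UNIV p"
    and bound: "\<And>e. 0 < e \<Longrightarrow> \<exists>M. \<forall>u. \<bar>p u\<bar> \<le> e * \<bar>u\<bar> + M"
  shows "surj (\<lambda>u. pos_neg_linear A B u + p u)"
proof -
  define m where "m = min A B"
  have "0 < m"
    using assms by (simp add: m_def)
  then obtain M where M: "\<And>u. \<bar>p u\<bar> \<le> m / 2 * \<bar>u\<bar> + M"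
    using bound[of "m / 2"] by auto
  have "0 \<le> M"
    using M[of 0] by simp
  show ?thesis
  proof (rule surjI[of _ "\<lambda>v. SOME u. pos_neg_linear A B u + p u = v"], rule someI_ex)
    fix v
    define U where "U = 2 * (\<bar>v\<bar> + M) / m"
    have "0 \<le> U"
      using \<open>0 < m\<close> \<open>0 \<le> M\<close> by (simp add: U_def)
    have "m * U \<le> pos_neg_linear A B U" "pos_neg_linear A B (- U) \<le> - (m * U)"
      using \<open>0 \<le> U\<close> assms(1,2) by (auto simp: pos_neg_linear_def m_def mult_right_mono)
    moreover have "m / 2 * U = \<bar>v\<bar> + M"
      using \<open>0 < m\<close> by (simp add: U_def)
    moreover have "- (m / 2 * U + M) \<le> p U" "p (- U) \<le> m / 2 * U + M"
      using M[of U] M[of "- U"] \<open>0 \<le> U\<close> by (simp_all add: abs_le_iff)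
    ultimately have "pos_neg_linear A B (- U) + p (- U) \<le> v" "v \<le> pos_neg_linear A B U + p U"
      using abs_ge_self[of v] abs_ge_minus_self[of v] by linarith+
    moreover have "isCont (\<lambda>u. pos_neg_linear A B u + p u) x" for x
      using assms(3) continuous_on_eq_continuous_at[OF open_UNIV]
      unfolding pos_neg_linear_def by (intro continuous_intros) auto
    ultimately show "\<exists>u. pos_neg_linear A B u + p u = v"
      using IVT[of "\<lambda>u. pos_neg_linear A B u + p u" "- U" v U] \<open>0 \<le> U\<close> by auto
  qed
qed

lemma deriv_Fenchel_conjugate_difference:
  fixes A B :: real and p :: "real \<Rightarrow> real"
  defines "j \<equiv> \<lambda>u. pos_neg_linear A B u + p u"
  assumes "0 < A" "0 < B" and p_cont: "continuous_on UNIV p" and "strict_mono j" "surj j"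
  shows "deriv (\<lambda>v. (SUP u. v * u - (A * (max u 0)\<^sup>2 / 2 + B * (max (- u) 0)\<^sup>2 / 2 + oint p u))
      - ((max v 0)\<^sup>2 / (2 * A) + (max (- v) 0)\<^sup>2 / (2 * B))) v
    = inv j v - pos_neg_linear (1 / A) (1 / B) v"
proof (rule DERIV_imp_deriv, rule DERIV_diff)
  have "continuous_on UNIV j"
    unfolding j_def pos_neg_linear_def by (intro continuous_intros p_cont)
  moreover have "((\<lambda>u. A * (max u 0)\<^sup>2 / 2 + B * (max (- u) 0)\<^sup>2 / 2 + oint p u)
      has_real_derivative j u) (at u)" for u
    unfolding j_def
    by (intro DERIV_add pos_neg_linear_primitive_has_real_derivative oint_has_real_derivative p_cont)
  ultimately have "((\<lambda>v. SUP u. v * u - (A * (max u 0)\<^sup>2 / 2 + B * (max (- u) 0)\<^sup>2 / 2 + oint p u))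
      has_real_derivative inv j v) (at (j (inv j v)))"
    using \<open>strict_mono j\<close> \<open>surj j\<close> by (intro Fenchel_conjugate_has_real_derivative_inverse)
  then show "((\<lambda>v. SUP u. v * u - (A * (max u 0)\<^sup>2 / 2 + B * (max (- u) 0)\<^sup>2 / 2 + oint p u))
      has_real_derivative inv j v) (at v)"
    by (simp add: surj_f_inv_f[OF \<open>surj j\<close>])
  have "(\<lambda>v. (max v 0)\<^sup>2 / (2 * A) + (max (- v) 0)\<^sup>2 / (2 * B))
      = (\<lambda>v. 1 / A * (max v 0)\<^sup>2 / 2 + 1 / B * (max (- v) 0)\<^sup>2 / 2)"
    by (auto simp: algebra_simps)
  then show "((\<lambda>v. (max v 0)\<^sup>2 / (2 * A) + (max (- v) 0)\<^sup>2 / (2 * B))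
      has_real_derivative pos_neg_linear (1 / A) (1 / B) v) (at v)"
    by (simp only: pos_neg_linear_primitive_has_real_derivative)
qed

definition uniformly_sublinear :: "'i set \<Rightarrow> ('i \<Rightarrow> real \<Rightarrow> real) \<Rightarrow> bool" where
  "uniformly_sublinear I f \<longleftrightarrow> (\<forall>e>0. \<exists>R. \<forall>i\<in>I. \<forall>u. R \<le> \<bar>u\<bar> \<longrightarrow> \<bar>f i u / u\<bar> \<le> e)"

lemma uniformly_sublinear_affine_bound:
  fixes h :: "real \<Rightarrow> real" and p :: "'i \<Rightarrow> real \<Rightarrow> real"
  assumes "uniformly_sublinear I p"
    and h: "\<And>u. \<bar>h u\<bar> \<le> L * \<bar>u\<bar>"
    and mono: "\<And>i. i \<in> I \<Longrightarrow> mono (\<lambda>u. h u + p i u)"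
    and "0 < e"
  shows "\<exists>M\<ge>0. \<forall>i\<in>I. \<forall>u. \<bar>p i u\<bar> \<le> e * \<bar>u\<bar> + M"
proof -
  have "0 \<le> L"
    using h[of 1] by simp
  obtain R0 where R0: "\<forall>i\<in>I. \<forall>u. R0 \<le> \<bar>u\<bar> \<longrightarrow> \<bar>p i u / u\<bar> \<le> e"
    using assms(1) \<open>0 < e\<close> unfolding uniformly_sublinear_def by blast
  define R where "R = max R0 1"
  have far: "\<bar>p i u\<bar> \<le> e * \<bar>u\<bar>" if "i \<in> I" "R \<le> \<bar>u\<bar>" for i u
  proof -
    have "u \<noteq> 0" "\<bar>p i u / u\<bar> \<le> e"
      using that R0 by (auto simp: R_def)
    then show ?thesis
      by (simp add: abs_divide divide_le_eq)
  qed
  \<comment> \<open>On [-R, R] monotonicity squeezes h + p i between its values at -R and R.\<close>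
  have near: "\<bar>p i u\<bar> \<le> (2 * L + e) * R" if "i \<in> I" "\<bar>u\<bar> \<le> R" for i u
  proof -
    have "h (- R) + p i (- R) \<le> h u + p i u" "h u + p i u \<le> h R + p i R"
      using monoD[OF mono[OF \<open>i \<in> I\<close>]] that by auto
    moreover have "\<bar>p i R\<bar> \<le> e * R" "\<bar>p i (- R)\<bar> \<le> e * R"
      using far[OF \<open>i \<in> I\<close>, of R] far[OF \<open>i \<in> I\<close>, of "- R"] by (simp_all add: R_def)
    moreover have "\<bar>h R\<bar> \<le> L * R" "\<bar>h (- R)\<bar> \<le> L * R" "\<bar>h u\<bar> \<le> L * R"
      using h[of R] h[of "- R"] order_trans[OF h[of u] mult_left_mono[OF that(2) \<open>0 \<le> L\<close>]]
      by (simp_all add: R_def)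
    ultimately show ?thesis
      by (simp add: abs_le_iff algebra_simps)
  qed
  show ?thesis
  proof (intro exI conjI ballI allI)
    show "0 \<le> (2 * L + e) * R"
      using \<open>0 \<le> L\<close> \<open>0 < e\<close> by (simp add: R_def)
    fix i u
    assume "i \<in> I"
    show "\<bar>p i u\<bar> \<le> e * \<bar>u\<bar> + (2 * L + e) * R"
    proof (cases "R \<le> \<bar>u\<bar>")
      case True
      with far[OF \<open>i \<in> I\<close>] \<open>0 \<le> (2 * L + e) * R\<close> show ?thesis
        by (smt (verit))
    next
      case False
      with near[OF \<open>i \<in> I\<close>, of u] \<open>0 < e\<close> show ?thesis
        by (smt (verit) mult_nonneg_nonneg abs_ge_zero)
    qed
  qed
qed

lemma uniformly_sublinear_inverse_difference:
  fixes h hi :: "real \<Rightarrow> real" and p g :: "'i \<Rightarrow> real \<Rightarrow> real"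
  assumes hi_h: "\<And>u. hi (h u) = u" and "hi 0 = 0"
    and hi_lipschitz: "\<And>x y. \<bar>hi x - hi y\<bar> \<le> L * \<bar>x - y\<bar>"
    and p_bound: "\<And>e. 0 < e \<Longrightarrow> \<exists>M\<ge>0. \<forall>i\<in>I. \<forall>u. \<bar>p i u\<bar> \<le> e * \<bar>u\<bar> + M"
    and g: "\<And>i v. i \<in> I \<Longrightarrow> h (g i v) + p i (g i v) = v"
  shows "uniformly_sublinear I (\<lambda>i v. g i v - hi v)"
  unfolding uniformly_sublinear_def
proof (intro allI impI)
  fix \<epsilon> :: real
  assume "0 < \<epsilon>"
  have "1 \<le> L * \<bar>h 1 - h 0\<bar>"
    using hi_lipschitz[of "h 1" "h 0"] by (simp add: hi_h)
  then have "0 < L"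
    by (smt (verit) mult_nonpos_nonneg abs_ge_zero)
  define e where "e = min (1 / (2 * L)) (\<epsilon> / (4 * L\<^sup>2))"
  have "0 < e" "2 * L * e \<le> 1" "4 * L\<^sup>2 * e \<le> \<epsilon>"
    using \<open>0 < L\<close> \<open>0 < \<epsilon>\<close> by (auto simp: e_def field_simps min_def)
  obtain M where "0 \<le> M" and M: "\<forall>i\<in>I. \<forall>u. \<bar>p i u\<bar> \<le> e * \<bar>u\<bar> + M"
    using p_bound[OF \<open>0 < e\<close>] by blast
  show "\<exists>R. \<forall>i\<in>I. \<forall>v. R \<le> \<bar>v\<bar> \<longrightarrow> \<bar>(g i v - hi v) / v\<bar> \<le> \<epsilon>"
  proof (intro exI ballI allI impI)
    fix i v
    assume "i \<in> I" and v: "M + 2 * L * M / \<epsilon> + 1 \<le> \<bar>v\<bar>"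
    define u r where "u = g i v" and "r = p i u"
    have v_eq: "v = h u + r"
      using g[OF \<open>i \<in> I\<close>] by (simp add: u_def r_def)
    have r: "\<bar>r\<bar> \<le> e * \<bar>u\<bar> + M"
      using M \<open>i \<in> I\<close> by (simp add: r_def)
    have "\<bar>u\<bar> = \<bar>hi (h u) - hi 0\<bar>"
      by (simp add: hi_h \<open>hi 0 = 0\<close>)
    also have "\<dots> \<le> L * \<bar>v - r\<bar>"
      using hi_lipschitz[of "h u" 0] by (simp add: v_eq)
    also have "\<dots> \<le> L * \<bar>v\<bar> + L * (e * \<bar>u\<bar>) + L * M"
      using r \<open>0 < L\<close> abs_triangle_ineq4[of v r] by (smt (verit) distrib_left mult_left_mono)
    finally have "\<bar>u\<bar> \<le> 2 * L * (\<bar>v\<bar> + M)"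
      using \<open>2 * L * e \<le> 1\<close> mult_right_mono[OF \<open>2 * L * e \<le> 1\<close> abs_ge_zero[of u]]
      by (simp add: algebra_simps)
    have "\<bar>u - hi v\<bar> = \<bar>hi (v - r) - hi v\<bar>"
      by (simp add: v_eq hi_h)
    also have "\<dots> \<le> L * \<bar>r\<bar>"
      using hi_lipschitz[of "v - r" v] by simp
    also have "\<dots> \<le> L * e * \<bar>u\<bar> + L * M"
      using r \<open>0 < L\<close> by (smt (verit) distrib_left mult.assoc mult_left_mono)
    also have "\<dots> \<le> L * e * (2 * L * (\<bar>v\<bar> + M)) + L * M"
      using \<open>\<bar>u\<bar> \<le> 2 * L * (\<bar>v\<bar> + M)\<close> \<open>0 < L\<close> \<open>0 < e\<close> by simp
    also have "\<dots> = 2 * L\<^sup>2 * e * (\<bar>v\<bar> + M) + L * M"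
      by (simp add: power2_eq_square algebra_simps)
    also have "\<dots> \<le> \<epsilon> / 2 * (\<bar>v\<bar> + M) + L * M"
      using \<open>4 * L\<^sup>2 * e \<le> \<epsilon>\<close> \<open>0 \<le> M\<close> by (intro add_mono mult_right_mono) auto
    also have "\<dots> \<le> \<epsilon> * \<bar>v\<bar>"
      using v \<open>0 < \<epsilon>\<close> by (simp add: field_simps)
    finally have "\<bar>u - hi v\<bar> \<le> \<epsilon> * \<bar>v\<bar>" .
    moreover have "0 < \<bar>v\<bar>"
      using v \<open>0 \<le> M\<close> \<open>0 < L\<close> \<open>0 < \<epsilon>\<close> by (smt (verit) divide_nonneg_pos mult_nonneg_nonneg)
    ultimately show "\<bar>(g i v - hi v) / v\<bar> \<le> \<epsilon>"
      by (simp add: u_def abs_divide divide_le_eq)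
  qed
qed

lemma uniformly_sublinear_deriv_Fenchel_conjugate_difference:
  fixes A B :: real and p :: "'i \<Rightarrow> real \<Rightarrow> real"
  assumes "0 < A" "0 < B"
    and p_cont: "\<And>i. i \<in> I \<Longrightarrow> continuous_on UNIV (p i)"
    and mono: "\<And>i. i \<in> I \<Longrightarrow> strict_mono (\<lambda>u. pos_neg_linear A B u + p i u)"
    and "uniformly_sublinear I p"
  shows "uniformly_sublinear I (\<lambda>i. deriv (\<lambda>v.
      (SUP u. v * u - (A * (max u 0)\<^sup>2 / 2 + B * (max (- u) 0)\<^sup>2 / 2 + oint (p i) u))
      - ((max v 0)\<^sup>2 / (2 * A) + (max (- v) 0)\<^sup>2 / (2 * B))))"
proof -
  define j where "j i = (\<lambda>u. pos_neg_linear A B u + p i u)" for i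
  define hi where "hi = pos_neg_linear (1 / A) (1 / B)"
  have p_bound: "\<exists>M\<ge>0. \<forall>i\<in>I. \<forall>u. \<bar>p i u\<bar> \<le> e * \<bar>u\<bar> + M" if "0 < e" for e
  proof (rule uniformly_sublinear_affine_bound[where h = "pos_neg_linear A B" and L = "max A B"])
    show "\<bar>pos_neg_linear A B u\<bar> \<le> max A B * \<bar>u\<bar>" for u
      using pos_neg_linear_lipschitz[of A B u 0] \<open>0 < A\<close> \<open>0 < B\<close> by (simp add: pos_neg_linear_def)
  qed (use mono strict_mono_mono \<open>uniformly_sublinear I p\<close> \<open>0 < e\<close> in auto)
  have j_surj: "surj (j i)" if "i \<in> I" for i
    unfolding j_def
  proof (rule surj_pos_neg_linear_plus[OF \<open>0 < A\<close> \<open>0 < B\<close> p_cont[OF that]])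
    show "\<exists>M. \<forall>u. \<bar>p i u\<bar> \<le> e * \<bar>u\<bar> + M" if "0 < e" for e
      using p_bound[OF \<open>0 < e\<close>] \<open>i \<in> I\<close> by fastforce
  qed
  have "uniformly_sublinear I (\<lambda>i v. inv (j i) v - hi v)"
  proof (rule uniformly_sublinear_inverse_difference[where h = "pos_neg_linear A B", OF _ _ _ p_bound])
    show "hi (pos_neg_linear A B u) = u" for u
      using \<open>0 < A\<close> \<open>0 < B\<close> by (simp add: hi_def pos_neg_linear_inverse)
    show "hi 0 = 0"
      by (simp add: hi_def pos_neg_linear_def)
    show "\<bar>hi x - hi y\<bar> \<le> max (1 / A) (1 / B) * \<bar>x - y\<bar>" for x y
      using \<open>0 < A\<close> \<open>0 < B\<close> unfolding hi_def by (intro pos_neg_linear_lipschitz) auto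
    show "pos_neg_linear A B (inv (j i) v) + p i (inv (j i) v) = v" if "i \<in> I" for i v
      using surj_f_inv_f[OF j_surj[OF that]] by (simp add: j_def)
  qed
  moreover have "deriv (\<lambda>v.
      (SUP u. v * u - (A * (max u 0)\<^sup>2 / 2 + B * (max (- u) 0)\<^sup>2 / 2 + oint (p i) u))
      - ((max v 0)\<^sup>2 / (2 * A) + (max (- v) 0)\<^sup>2 / (2 * B))) v = inv (j i) v - hi v"
    if "i \<in> I" for i v
    using deriv_Fenchel_conjugate_difference[OF \<open>0 < A\<close> \<open>0 < B\<close> p_cont[OF that] mono[OF that]
        j_surj[OF that, unfolded j_def]]
    by (simp add: j_def hi_def)
  ultimately show ?thesis
    by (simp add: uniformly_sublinear_def)
qed

theorem lemma3:
  fixes k :: int and eps1 eps2 a b :: real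
    and p :: "real \<Rightarrow> real \<Rightarrow> real \<Rightarrow> real"
  defines "mu \<equiv> max 0 (- 1 / (real_of_int (lam (k - 1)) + eps1)) + eps2"
  defines "pk \<equiv> real_of_int (lam (k - 1)) + eps1"
  defines "qk \<equiv> real_of_int (lam (k - 1)) + eps1 + 1 / mu"
  assumes k_nz: "k \<noteq> 0"
    and eps1_pos: "0 < eps1"
    and eps1_lt: "eps1 < real_of_int (lam k) - real_of_int (lam (k - 1))"
    and eps2_pos: "0 < eps2"
    and eps2_lt: "eps2 < 1 / (real_of_int (lam k) - real_of_int (lam (k - 1)) - eps1)
                        - max 0 (- 1 / (real_of_int (lam (k - 1)) + eps1))"
    and a_in: "a \<in> {pk<..<qk}" and b_in: "b \<in> {pk<..<qk}"
    and p_cont: "continuous_on ({0..pi} \<times> UNIV \<times> UNIV) (\<lambda>(s, t, u). p s t u)"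
    and p_per: "\<And>s t u. p s (t + 2 * pi) u = p s t u"
    and p_sublin: "\<forall>e>0. \<exists>R. \<forall>s\<in>{0..pi}. \<forall>t u. R \<le> \<bar>u\<bar> \<longrightarrow> \<bar>p s t u / u\<bar> \<le> e"
    and mono_inc: "\<And>s t u w. s \<in> {0..pi} \<Longrightarrow> u < w \<Longrightarrow>
        a * max u 0 - b * max (- u) 0 + p s t u - pk * u
          < a * max w 0 - b * max (- w) 0 + p s t w - pk * w"
    and mono_dec: "\<And>s t u w. s \<in> {0..pi} \<Longrightarrow> u < w \<Longrightarrow>
        a * max w 0 - b * max (- w) 0 + p s t w - qk * w
          < a * max u 0 - b * max (- u) 0 + p s t u - qk * u"
  defines "H \<equiv> \<lambda>u::real. (a - pk) * (max u 0)\<^sup>2 / 2 + (b - pk) * (max (- u) 0)\<^sup>2 / 2"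
  defines "P \<equiv> \<lambda>s t u. oint (p s t) u"
  defines "J \<equiv> \<lambda>s t u. H u + P s t u"
  defines "Jstar \<equiv> \<lambda>s t v. (SUP u. v * u - J s t u)"
  defines "Hstar \<equiv> \<lambda>v::real. (max v 0)\<^sup>2 / (2 * (a - pk)) + (max (- v) 0)\<^sup>2 / (2 * (b - pk))"
  defines "Q \<equiv> \<lambda>s t v. Jstar s t v - Hstar v"
  defines "q \<equiv> \<lambda>s t v. deriv (Q s t) v"
  shows "\<forall>e>0. \<exists>R. \<forall>s\<in>{0..pi}. \<forall>t v. R \<le> \<bar>v\<bar> \<longrightarrow> \<bar>q s t v / v\<bar> \<le> e"
proof -
  have "0 < a - pk" "0 < b - pk"
    using a_in b_in by simp_all
  have j_eq: "a * max u 0 - b * max (- u) 0 + p s t u - pk * u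
      = pos_neg_linear (a - pk) (b - pk) u + p s t u" for s t u
    by (cases "0 \<le> u") (auto simp: pos_neg_linear_def max_def algebra_simps)
  have "uniformly_sublinear ({0..pi} \<times> UNIV) (\<lambda>i. deriv (\<lambda>v.
      (SUP u. v * u - ((a - pk) * (max u 0)\<^sup>2 / 2 + (b - pk) * (max (- u) 0)\<^sup>2 / 2
        + oint ((\<lambda>(s, t). p s t) i) u))
      - ((max v 0)\<^sup>2 / (2 * (a - pk)) + (max (- v) 0)\<^sup>2 / (2 * (b - pk)))))"
  proof (rule uniformly_sublinear_deriv_Fenchel_conjugate_difference[OF \<open>0 < a - pk\<close> \<open>0 < b - pk\<close>])
    show "continuous_on UNIV ((\<lambda>(s, t). p s t) i)" if "i \<in> {0..pi} \<times> UNIV" for i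
    proof (cases i)
      case (Pair s t)
      have "continuous_on UNIV (\<lambda>u. (\<lambda>(s, t, u). p s t u) (s, t, u))"
        by (rule continuous_on_compose2[OF p_cont]) (use that Pair in \<open>auto intro!: continuous_intros\<close>)
      then show ?thesis
        by (simp add: Pair)
    qed
    show "strict_mono (\<lambda>u. pos_neg_linear (a - pk) (b - pk) u + (\<lambda>(s, t). p s t) i u)"
      if "i \<in> {0..pi} \<times> UNIV" for i
      using mono_inc that by (auto simp: strict_mono_def j_eq[symmetric] split: prod.splits)
    show "uniformly_sublinear ({0..pi} \<times> UNIV) (\<lambda>(s, t). p s t)"
      using p_sublin unfolding uniformly_sublinear_def by fastforce
  qed
  then show ?thesis
    by (auto simp: uniformly_sublinear_def q_def Q_def Jstar_def J_def H_def P_def Hstar_def)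
qed

end
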